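(* A point $z\in\mathbb{R}^{d\times(n+1)}$ belongs to $\bigcup_{H\in\mathcal{H}}\Delta_H$ if and only if there exists $\delta$ such that $(z,\delta)$ satisfies (Inc-1); i.e. (Inc-1) is an MILP formulation of $\{\Delta_H\}_{H\in\mathcal{H}}$. Moreover, with $F(z)=(F_1(z_1),\dots,F_d(z_d))$ for $z\in\Delta$, one has $F(\Delta_H)=H$ for each $H\in\mathcal{H}$.
   Context: Let $d,n$ be positive integers, $[k]=\{1,\dots,k\}$. Let $a\in\mathbb{R}^{d\times(n+1)}$ with $a_{i0}<\dots<a_{in}$ for each $i$. For each $i$ let $l_i\ge1$ and $0=\tau(i,0)<\tau(i,1)<\dots<\tau(i,l_i)=n$ be integers. $\mathcal{H}=\{\prod_{i=1}^d[a_{i\tau(i,t_i-1)},a_{i\tau(i,t_i)}]\mid t_i\in[l_i]\}$. $\Delta_i=\{z_i\in\mathbb{R}^{n+1}\mid1=z_{i0}\ge z_{i1}\ge\dots\ge z_{in}\ge0\}$, $\Delta=\prod_i\Delta_i$. For $H=\prod_i[a_{i\tau(i,t_i-1)},a_{i\tau(i,t_i)}]$, $\Delta_H=\{z\in\Delta\mid z_{ij}=1\text{ for }j\le\tau(i,t_i-1),\ z_{ij}=0\text{ for }j>\tau(i,t_i),\ \forall i\}$. (Inc-1) in $(z,\delta)$, $\delta=(\delta_{it})_{i\in[d],t\in[l_i-1]}$: $z_i\in\Delta_i$, $\delta_{it}\in\{0,1\}$, $z_{i\tau(i,t)}\ge\delta_{it}\ge z_{i\tau(i,t)+1}$. $F_i(z_i)=a_{i0}z_{i0}+\sum_{j=1}^n(a_{ij}-a_{i,j-1})z_{ij}$.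 *)

theory Defs
  imports "HOL-Library.FuncSet" Complex_Main
begin

text \<open>Points of R^(d x (n+1)) are modelled as extensional functions
  z :: nat => nat => real with row index i in {1..d} and column index j in {0..n}.\<close>

definition Delta_i :: "nat \<Rightarrow> (nat \<Rightarrow> real) set" where
  "Delta_i n = {zi \<in> extensional {0..n}. zi 0 = 1 \<and> (\<forall>j\<in>{1..n}. zi j \<le> zi (j - 1)) \<and> zi n \<ge> 0}"

definition Delta :: "nat \<Rightarrow> nat \<Rightarrow> (nat \<Rightarrow> nat \<Rightarrow> real) set" where
  "Delta d n = (\<Pi>\<^sub>E i\<in>{1..d}. Delta_i n)"

definition Tset :: "nat \<Rightarrow> (nat \<Rightarrow> nat) \<Rightarrow> (nat \<Rightarrow> nat) set" where
  "Tset d l = (\<Pi>\<^sub>E i\<in>{1..d}. {1..l i})"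

definition boxH :: "nat \<Rightarrow> (nat \<Rightarrow> nat \<Rightarrow> real) \<Rightarrow> (nat \<Rightarrow> nat \<Rightarrow> nat) \<Rightarrow> (nat \<Rightarrow> nat) \<Rightarrow> (nat \<Rightarrow> real) set" where
  "boxH d a \<tau> t = (\<Pi>\<^sub>E i\<in>{1..d}. {a i (\<tau> i (t i - 1)) .. a i (\<tau> i (t i))})"

definition calH :: "nat \<Rightarrow> (nat \<Rightarrow> nat \<Rightarrow> real) \<Rightarrow> (nat \<Rightarrow> nat) \<Rightarrow> (nat \<Rightarrow> nat \<Rightarrow> nat) \<Rightarrow> (nat \<Rightarrow> real) set set" where
  "calH d a l \<tau> = boxH d a \<tau> ` Tset d l"

definition DeltaH :: "nat \<Rightarrow> nat \<Rightarrow> (nat \<Rightarrow> nat \<Rightarrow> nat) \<Rightarrow> (nat \<Rightarrow> nat) \<Rightarrow> (nat \<Rightarrow> nat \<Rightarrow> real) set" where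
  "DeltaH d n \<tau> t = {z \<in> Delta d n. \<forall>i\<in>{1..d}.
      (\<forall>j\<in>{0..n}. j \<le> \<tau> i (t i - 1) \<longrightarrow> z i j = 1) \<and>
      (\<forall>j\<in>{0..n}. j > \<tau> i (t i) \<longrightarrow> z i j = 0)}"

definition Inc1 :: "nat \<Rightarrow> nat \<Rightarrow> (nat \<Rightarrow> nat) \<Rightarrow> (nat \<Rightarrow> nat \<Rightarrow> nat) \<Rightarrow>
    (nat \<Rightarrow> nat \<Rightarrow> real) \<Rightarrow> (nat \<Rightarrow> nat \<Rightarrow> real) \<Rightarrow> bool" where
  "Inc1 d n l \<tau> z \<delta> \<longleftrightarrow> z \<in> Delta d n \<and>
     (\<forall>i\<in>{1..d}. \<forall>t\<in>{1..l i - 1}.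
        \<delta> i t \<in> {0, 1} \<and> z i (\<tau> i t) \<ge> \<delta> i t \<and> \<delta> i t \<ge> z i (\<tau> i t + 1))"

definition F_i :: "nat \<Rightarrow> (nat \<Rightarrow> nat \<Rightarrow> real) \<Rightarrow> nat \<Rightarrow> (nat \<Rightarrow> real) \<Rightarrow> real" where
  "F_i n a i zi = a i 0 * zi 0 + (\<Sum>j=1..n. (a i j - a i (j - 1)) * zi j)"

definition Fvec :: "nat \<Rightarrow> nat \<Rightarrow> (nat \<Rightarrow> nat \<Rightarrow> real) \<Rightarrow> (nat \<Rightarrow> nat \<Rightarrow> real) \<Rightarrow> (nat \<Rightarrow> real)" where
  "Fvec d n a z = restrict (\<lambda>i. F_i n a i (z i)) {1..d}"

end

theory Submission
  imports Defs
begin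

text \<open>Everything happens row by row. A row of \<open>\<Delta>\<close> is a nonincreasing sequence in [0,1]
  starting at 1, and its part of \<open>\<Delta>\<^sub>H\<close> pins it to 1 up to \<open>\<tau>(i,t-1)\<close> and to 0 after \<open>\<tau>(i,t)\<close>.
  Given such a row, \<open>\<delta>\<^sub>i\<^sub>s = [s < t]\<close> satisfies (Inc-1); conversely, the least \<open>s\<close> with
  \<open>\<delta>\<^sub>i\<^sub>s = 0\<close> (or \<open>s = l\<^sub>i\<close>) is a valid \<open>t\<close>. Since \<open>a\<^sub>i\<close> increases, \<open>F\<^sub>i\<close> is monotone in the row,
  and by telescoping it sends the 0/1 step ending at \<open>k\<close> to \<open>a\<^sub>i\<^sub>k\<close>; this bounds \<open>F\<^sub>i\<close> on the
  pinned rows, and as \<open>F\<^sub>i\<close> is affine, convex combinations of the two extreme steps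
  attain the whole interval.\<close>

lemma Delta_i_antimono:
  assumes "zi \<in> Delta_i n" and "j \<le> k" and "k \<le> n"
  shows "zi k \<le> zi j"
proof (rule lift_Suc_antimono_le_ivl[of "{0..<n}"])
  show "zi (Suc m) \<le> zi m" if "m \<in> {0..<n}" for m
    using assms(1) that unfolding Delta_i_def by force
qed (use assms in auto)

lemma Delta_i_bounds:
  assumes "zi \<in> Delta_i n" and "j \<le> n"
  shows "0 \<le> zi j" and "zi j \<le> 1"
proof -
  have "zi n \<le> zi j" and "zi j \<le> zi 0"
    using Delta_i_antimono[OF assms(1)] assms(2) by auto
  then show "0 \<le> zi j" and "zi j \<le> 1"
    using assms(1) unfolding Delta_i_def by auto
qed

definition breakpoints :: "nat \<Rightarrow> nat \<Rightarrow> (nat \<Rightarrow> nat) \<Rightarrow> bool" where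
  "breakpoints n L \<tau> \<longleftrightarrow> 1 \<le> L \<and> \<tau> 0 = 0 \<and> \<tau> L = n \<and> (\<forall>s\<in>{1..L}. \<tau> (s - 1) < \<tau> s)"

lemma breakpoints_less:
  assumes "breakpoints n L \<tau>" and "s < t" and "t \<le> L"
  shows "\<tau> s < \<tau> t"
proof (rule lift_Suc_mono_less_ivl[where N="{0..<L}" and f=\<tau>])
  show "\<tau> m < \<tau> (Suc m)" if "m \<in> {0..<L}" for m
    using assms(1) that unfolding breakpoints_def by force
qed (use assms in auto)

lemma breakpoints_le:
  assumes "breakpoints n L \<tau>" and "s \<le> t" and "t \<le> L"
  shows "\<tau> s \<le> \<tau> t"
  using breakpoints_less[OF assms(1)] assms(2,3) by (cases "s = t") (auto intro: less_imp_le)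

lemma breakpoints_le_n:
  assumes "breakpoints n L \<tau>" and "s \<le> L"
  shows "\<tau> s \<le> n"
  using breakpoints_le[OF assms(1) assms(2)] assms(1) unfolding breakpoints_def by auto

definition row_pinned :: "nat \<Rightarrow> nat \<Rightarrow> nat \<Rightarrow> (nat \<Rightarrow> real) \<Rightarrow> bool" where
  "row_pinned n p q zi \<longleftrightarrow> (\<forall>j\<in>{0..n}. j \<le> p \<longrightarrow> zi j = 1) \<and> (\<forall>j\<in>{0..n}. q < j \<longrightarrow> zi j = 0)"

definition row_Inc1 :: "nat \<Rightarrow> (nat \<Rightarrow> nat) \<Rightarrow> (nat \<Rightarrow> real) \<Rightarrow> (nat \<Rightarrow> real) \<Rightarrow> bool" where
  "row_Inc1 L \<tau> zi \<delta> \<longleftrightarrow> (\<forall>s\<in>{1..L - 1}. \<delta> s \<in> {0, 1} \<and> \<delta> s \<le> zi (\<tau> s) \<and> zi (\<tau> s + 1) \<le> \<delta> s)"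

lemma row_Inc1_if_row_pinned:
  assumes zi: "zi \<in> Delta_i n" and bp: "breakpoints n L \<tau>" and t: "t \<in> {1..L}"
    and pinned: "row_pinned n (\<tau> (t - 1)) (\<tau> t) zi"
  shows "row_Inc1 L \<tau> zi (\<lambda>s. if s < t then 1 else 0)"
  unfolding row_Inc1_def
proof (intro ballI conjI)
  fix s assume s: "s \<in> {1..L - 1}"
  have "\<tau> s < n"
    using breakpoints_less[OF bp, of s L] s bp unfolding breakpoints_def by auto
  show "(if s < t then 1 else 0) \<le> zi (\<tau> s)"
  proof (cases "s < t")
    case True
    then have "\<tau> s \<le> \<tau> (t - 1)" using breakpoints_le[OF bp, of s "t - 1"] t by auto
    then show ?thesis using True pinned \<open>\<tau> s < n\<close> unfolding row_pinned_def by auto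
  qed (use Delta_i_bounds[OF zi, of "\<tau> s"] \<open>\<tau> s < n\<close> in auto)
  show "zi (\<tau> s + 1) \<le> (if s < t then 1 else 0)"
  proof (cases "s < t")
    case False
    then have "\<tau> t \<le> \<tau> s" using breakpoints_le[OF bp, of t s] s by auto
    then show ?thesis using False pinned \<open>\<tau> s < n\<close> unfolding row_pinned_def by auto
  qed (use Delta_i_bounds[OF zi, of "\<tau> s + 1"] \<open>\<tau> s < n\<close> in auto)
qed simp

lemma row_pinned_if_row_Inc1:
  assumes zi: "zi \<in> Delta_i n" and bp: "breakpoints n L \<tau>" and inc: "row_Inc1 L \<tau> zi \<delta>"
  shows "\<exists>t\<in>{1..L}. row_pinned n (\<tau> (t - 1)) (\<tau> t) zi"
proof -
  define t where "t = (LEAST s. 1 \<le> s \<and> (s = L \<or> \<delta> s = 0))"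
  have L: "1 \<le> L" "\<tau> 0 = 0" "\<tau> L = n" using bp unfolding breakpoints_def by auto
  have t: "1 \<le> t" "t = L \<or> \<delta> t = 0"
    using LeastI[of "\<lambda>s. 1 \<le> s \<and> (s = L \<or> \<delta> s = 0)" L] L unfolding t_def by auto
  have "t \<le> L"
    using Least_le[of "\<lambda>s. 1 \<le> s \<and> (s = L \<or> \<delta> s = 0)" L] L unfolding t_def by auto
  have ones: "zi j = 1" if "j \<le> \<tau> (t - 1)" for j
  proof (cases "t = 1")
    case True
    then show ?thesis using that L zi unfolding Delta_i_def by auto
  next
    case False
    then have s: "t - 1 \<in> {1..L - 1}" using t \<open>t \<le> L\<close> by auto
    then have "\<delta> (t - 1) \<noteq> 0"
      using not_less_Least[of "t - 1" "\<lambda>s. 1 \<le> s \<and> (s = L \<or> \<delta> s = 0)"] unfolding t_def by auto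
    then have "1 \<le> zi (\<tau> (t - 1))" using inc s unfolding row_Inc1_def by fastforce
    moreover have "\<tau> (t - 1) \<le> n" using breakpoints_le_n[OF bp, of "t - 1"] s by auto
    ultimately show ?thesis
      using that Delta_i_antimono[OF zi that] Delta_i_bounds[OF zi, of j] by auto
  qed
  have zeros: "zi j = 0" if "\<tau> t < j" "j \<le> n" for j
  proof -
    have "t \<noteq> L" using that L by auto
    then have s: "t \<in> {1..L - 1}" "\<delta> t = 0" using t \<open>t \<le> L\<close> by auto
    then have "zi (\<tau> t + 1) \<le> 0" using inc unfolding row_Inc1_def by fastforce
    then show ?thesis
      using that Delta_i_antimono[OF zi, of "\<tau> t + 1" j] Delta_i_bounds[OF zi, of j] by auto
  qed
  have "row_pinned n (\<tau> (t - 1)) (\<tau> t) zi"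
    using ones zeros unfolding row_pinned_def by auto
  then show ?thesis using t \<open>t \<le> L\<close> by auto
qed

lemma row_pinned_iff_row_Inc1:
  assumes "zi \<in> Delta_i n" and "breakpoints n L \<tau>"
  shows "(\<exists>t\<in>{1..L}. row_pinned n (\<tau> (t - 1)) (\<tau> t) zi) \<longleftrightarrow> (\<exists>\<delta>. row_Inc1 L \<tau> zi \<delta>)"
  using row_Inc1_if_row_pinned[OF assms] row_pinned_if_row_Inc1[OF assms] by blast

lemma F_i_mono:
  assumes "\<forall>j\<in>{1..n}. a i (j - 1) \<le> a i j"
    and "u 0 = v 0" and "\<forall>j\<in>{1..n}. u j \<le> v j"
  shows "F_i n a i u \<le> F_i n a i v"
  unfolding F_i_def using assms by (auto intro!: sum_mono mult_left_mono)

lemma F_i_step: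
  assumes "k \<le> n"
  shows "F_i n a i (\<lambda>j. if j \<le> k then 1 else 0) = a i k"
proof -
  have "(\<Sum>j=1..n. (a i j - a i (j - 1)) * (if j \<le> k then 1 else 0))
      = (\<Sum>j=1..n. if j \<in> {..k} then a i j - a i (j - 1) else 0)"
    by (intro sum.cong) auto
  also have "\<dots> = (\<Sum>j\<in>{1..n} \<inter> {..k}. a i j - a i (j - 1))"
    by (rule sum.inter_restrict[symmetric]) simp
  also have "{1..n} \<inter> {..k} = {Suc 0..k}" using assms by auto
  also have "(\<Sum>j\<in>{Suc 0..k}. a i j - a i (j - 1)) = a i k - a i 0"
    by (rule sum_telescope'') simp
  finally show ?thesis unfolding F_i_def by simp
qed

lemma F_i_convex_combination:
  "F_i n a i (\<lambda>j. (1 - \<theta>) * u j + \<theta> * v j) = (1 - \<theta>) * F_i n a i u + \<theta> * F_i n a i v"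
  unfolding F_i_def by (simp add: distrib_left distrib_right sum.distrib sum_distrib_left mult_ac)

lemma F_i_restrict: "F_i n a i (restrict zi {0..n}) = F_i n a i zi"
  unfolding F_i_def by simp

lemma F_i_pinned_bounds:
  assumes a: "\<forall>j\<in>{1..n}. a i (j - 1) \<le> a i j"
    and zi: "zi \<in> Delta_i n" and pinned: "row_pinned n p q zi" and "p \<le> n" "q \<le> n"
  shows "a i p \<le> F_i n a i zi" and "F_i n a i zi \<le> a i q"
proof -
  have "zi 0 = 1" using zi unfolding Delta_i_def by simp
  then have "F_i n a i (\<lambda>j. if j \<le> p then 1 else 0) \<le> F_i n a i zi"
    and "F_i n a i zi \<le> F_i n a i (\<lambda>j. if j \<le> q then 1 else 0)"
    using pinned Delta_i_bounds[OF zi]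
    by (auto simp: row_pinned_def intro!: F_i_mono[where a=a and i=i, OF a])
  then show "a i p \<le> F_i n a i zi" and "F_i n a i zi \<le> a i q"
    using F_i_step \<open>p \<le> n\<close> \<open>q \<le> n\<close> by simp_all
qed

lemma F_i_image_pinned:
  assumes a: "\<forall>j\<in>{1..n}. a i (j - 1) \<le> a i j" and "p \<le> q" and "q \<le> n"
  shows "F_i n a i ` {zi \<in> Delta_i n. row_pinned n p q zi} = {a i p .. a i q}"
proof
  show "F_i n a i ` {zi \<in> Delta_i n. row_pinned n p q zi} \<subseteq> {a i p .. a i q}"
    using F_i_pinned_bounds[where a=a and i=i, OF a] assms by fastforce
next
  show "{a i p .. a i q} \<subseteq> F_i n a i ` {zi \<in> Delta_i n. row_pinned n p q zi}"
  proof
    fix x assume x: "x \<in> {a i p .. a i q}"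
    \<comment> \<open>If \<open>a i p = a i q\<close>, division by zero makes \<open>\<theta> = 0\<close>, which is still correct.\<close>
    define \<theta> where "\<theta> = (x - a i p) / (a i q - a i p)"
    have "a i p = a i q \<or> a i p < a i q" using x by auto
    then have \<theta>: "0 \<le> \<theta>" "\<theta> \<le> 1" and x_eq: "x = (1 - \<theta>) * a i p + \<theta> * a i q"
      using x by (auto simp: \<theta>_def field_simps)
    define zi where "zi = restrict (\<lambda>j. (1 - \<theta>) * (if j \<le> p then 1 else 0)
      + \<theta> * (if j \<le> q then 1 else 0)) {0..n}"
    have "zi \<in> Delta_i n"
      using \<theta> \<open>p \<le> q\<close> unfolding zi_def Delta_i_def by auto
    moreover have "row_pinned n p q zi"
      using \<open>p \<le> q\<close> unfolding zi_def row_pinned_def by auto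
    moreover have "F_i n a i zi = x"
      unfolding zi_def F_i_restrict F_i_convex_combination
      using F_i_step \<open>p \<le> q\<close> \<open>q \<le> n\<close> x_eq by simp
    ultimately show "x \<in> F_i n a i ` {zi \<in> Delta_i n. row_pinned n p q zi}" by blast
  qed
qed

lemma image_restrict_PiE:
  "(\<lambda>x. restrict (\<lambda>i. f i (x i)) I) ` PiE I A = PiE I (\<lambda>i. f i ` A i)"
proof
  show "(\<lambda>x. restrict (\<lambda>i. f i (x i)) I) ` PiE I A \<subseteq> PiE I (\<lambda>i. f i ` A i)"
    by (auto simp: PiE_iff)
next
  show "PiE I (\<lambda>i. f i ` A i) \<subseteq> (\<lambda>x. restrict (\<lambda>i. f i (x i)) I) ` PiE I A"
  proof
    fix y assume y: "y \<in> PiE I (\<lambda>i. f i ` A i)"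
    then have "\<forall>i\<in>I. \<exists>x\<in>A i. y i = f i x" by (auto simp: PiE_iff)
    then obtain x where x: "\<forall>i\<in>I. x i \<in> A i \<and> y i = f i (x i)"
      using bchoice[of I "\<lambda>i x. x \<in> A i \<and> y i = f i x"] by blast
    then have "y = restrict (\<lambda>i. f i (restrict x I i)) I"
      using y by (auto simp: PiE_iff extensional_def)
    moreover have "restrict x I \<in> PiE I A" using x by simp
    ultimately show "y \<in> (\<lambda>x. restrict (\<lambda>i. f i (x i)) I) ` PiE I A" by blast
  qed
qed

lemma bex_PiE_iff_ball_bex:
  "(\<exists>t\<in>PiE I A. \<forall>i\<in>I. P i (t i)) \<longleftrightarrow> (\<forall>i\<in>I. \<exists>x\<in>A i. P i x)"
proof
  assume "\<forall>i\<in>I. \<exists>x\<in>A i. P i x"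
  then obtain t where "\<forall>i\<in>I. t i \<in> A i \<and> P i (t i)"
    using bchoice[of I "\<lambda>i x. x \<in> A i \<and> P i x"] by blast
  then show "\<exists>t\<in>PiE I A. \<forall>i\<in>I. P i (t i)"
    by (intro bexI[of _ "restrict t I"]) auto
qed (auto simp: PiE_iff)

lemma DeltaH_eq_PiE:
  "DeltaH d n \<tau> t = (\<Pi>\<^sub>E i\<in>{1..d}. {zi \<in> Delta_i n. row_pinned n (\<tau> i (t i - 1)) (\<tau> i (t i)) zi})"
  unfolding DeltaH_def Delta_def row_pinned_def by auto

lemma Union_DeltaH_iff_Inc1:
  assumes "\<forall>i\<in>{1..d}. breakpoints n (l i) (\<tau> i)"
  shows "z \<in> (\<Union>t\<in>Tset d l. DeltaH d n \<tau> t) \<longleftrightarrow> (\<exists>\<delta>. Inc1 d n l \<tau> z \<delta>)"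
proof -
  have rows: "z \<in> Delta d n \<Longrightarrow> i \<in> {1..d} \<Longrightarrow> z i \<in> Delta_i n" for i
    unfolding Delta_def by auto
  have "z \<in> (\<Union>t\<in>Tset d l. DeltaH d n \<tau> t) \<longleftrightarrow>
      z \<in> Delta d n \<and> (\<exists>t\<in>Tset d l. \<forall>i\<in>{1..d}. row_pinned n (\<tau> i (t i - 1)) (\<tau> i (t i)) (z i))"
    unfolding DeltaH_eq_PiE Delta_def by auto
  also have "\<dots> \<longleftrightarrow> z \<in> Delta d n \<and> (\<forall>i\<in>{1..d}. \<exists>t\<in>{1..l i}. row_pinned n (\<tau> i (t - 1)) (\<tau> i t) (z i))"
    using bex_PiE_iff_ball_bex[of "{1..d}" "\<lambda>i. {1..l i}"
        "\<lambda>i ti. row_pinned n (\<tau> i (ti - 1)) (\<tau> i ti) (z i)"]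
    unfolding Tset_def by simp
  also have "\<dots> \<longleftrightarrow> z \<in> Delta d n \<and> (\<forall>i\<in>{1..d}. \<exists>\<delta>. row_Inc1 (l i) (\<tau> i) (z i) \<delta>)"
    using row_pinned_iff_row_Inc1[OF rows] assms by auto
  also have "\<dots> \<longleftrightarrow> (\<exists>\<delta>. Inc1 d n l \<tau> z \<delta>)"
    unfolding Inc1_def row_Inc1_def by (auto dest: bchoice)
  finally show ?thesis .
qed

lemma Fvec_image_DeltaH:
  assumes a: "\<forall>i\<in>{1..d}. \<forall>j\<in>{1..n}. a i (j - 1) \<le> a i j"
    and bp: "\<forall>i\<in>{1..d}. breakpoints n (l i) (\<tau> i)" and t: "t \<in> Tset d l"
  shows "Fvec d n a ` DeltaH d n \<tau> t = boxH d a \<tau> t"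
proof -
  have "F_i n a i ` {zi \<in> Delta_i n. row_pinned n (\<tau> i (t i - 1)) (\<tau> i (t i)) zi}
      = {a i (\<tau> i (t i - 1)) .. a i (\<tau> i (t i))}" if i: "i \<in> {1..d}" for i
  proof (rule F_i_image_pinned)
    show "\<forall>j\<in>{1..n}. a i (j - 1) \<le> a i j" using a i by blast
    have "t i \<in> {1..l i}" using t i unfolding Tset_def by auto
    then show "\<tau> i (t i - 1) \<le> \<tau> i (t i)" and "\<tau> i (t i) \<le> n"
      using breakpoints_le[of n "l i" "\<tau> i" "t i - 1" "t i"]
        breakpoints_le_n[of n "l i" "\<tau> i" "t i"] bp i by auto
  qed
  then show ?thesis
    unfolding Fvec_def[abs_def] DeltaH_eq_PiE image_restrict_PiE boxH_def by (rule PiE_cong)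
qed

theorem lemma3p1:
  fixes d n :: nat and a :: "nat \<Rightarrow> nat \<Rightarrow> real"
    and l :: "nat \<Rightarrow> nat" and \<tau> :: "nat \<Rightarrow> nat \<Rightarrow> nat"
  assumes "d \<ge> 1" and "n \<ge> 1"
    and "\<forall>i\<in>{1..d}. \<forall>j\<in>{1..n}. a i (j - 1) < a i j"
    and "\<forall>i\<in>{1..d}. l i \<ge> 1 \<and> \<tau> i 0 = 0 \<and> \<tau> i (l i) = n \<and>
            (\<forall>t\<in>{1..l i}. \<tau> i (t - 1) < \<tau> i t)"
  shows "(\<forall>z. z \<in> (\<Union>t\<in>Tset d l. DeltaH d n \<tau> t) \<longleftrightarrow> (\<exists>\<delta>. Inc1 d n l \<tau> z \<delta>))
       \<and> (\<forall>t\<in>Tset d l. Fvec d n a ` DeltaH d n \<tau> t = boxH d a \<tau> t)"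
proof -
  have bp: "\<forall>i\<in>{1..d}. breakpoints n (l i) (\<tau> i)"
    using assms(4) unfolding breakpoints_def by blast
  have a: "\<forall>i\<in>{1..d}. \<forall>j\<in>{1..n}. a i (j - 1) \<le> a i j"
    using assms(3) by (auto intro: less_imp_le)
  show ?thesis
    using Union_DeltaH_iff_Inc1[OF bp] Fvec_image_DeltaH[OF a bp] by simp
qed

end
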